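(* Let $H \cong K_n - M$, where $M$ is a matching of $K_n$, and let $g$ be a demand function for $H$. Let $V(M)$ denote the set of endpoints of edges in $M$. If $L$ is a fractional list-assignment for $H$ such that (i) for each $v\in V(H)\setminus V(M)$, $\mu(L(v)) \geq \sum_{u\in V(H)\setminus V(M)}g(u) + \sum_{uw\in M}\max\{g(u), g(w)\}$, (ii) for each $v\in V(M)$, $\mu(L(v)) \geq g(v) + \sum_{uw\in M,\, v\notin \{u,w\}}\max\{g(u), g(w)\}$, and (iii) for each $uv\in M$, $\mu(L(u)) + \mu(L(v)) \geq \sum_{w\in V(H)}g(w)$, then $H$ has a fractional $(g, L)$-coloring.
   Context: $\mu$ is Lebesgue measure. A demand function for a graph $H$ is a function $g: V(H)\to [0,1]\cap\mathbb{Q}$. A fractional list-assignment is a function $L$ assigning to each vertex a measurable subset $L(v)\subseteq[0,1]$. A fractional $(g,L)$-coloring of $H$ is an assignment $\phi$ of measurable sets $\phi(v)\subseteq L(v)$ with $\mu(\phi(v))\geq g(v)$ for every vertex and $\phi(u)\cap\phi(v)=\varnothing$ for every edge $uv$ of $H$. *)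

theory Defs
  imports "HOL-Analysis.Analysis"
begin

definition complete_edges :: "'a set \<Rightarrow> 'a set set" where
  "complete_edges V = {{u, v} | u v. u \<in> V \<and> v \<in> V \<and> u \<noteq> v}"

definition is_matching :: "'a set \<Rightarrow> 'a set set \<Rightarrow> bool" where
  "is_matching V M \<longleftrightarrow> M \<subseteq> complete_edges V \<and>
     (\<forall>e\<in>M. \<forall>e'\<in>M. e \<noteq> e' \<longrightarrow> e \<inter> e' = {})"

definition demand_function :: "'a set \<Rightarrow> ('a \<Rightarrow> real) \<Rightarrow> bool" where
  "demand_function V g \<longleftrightarrow> (\<forall>v\<in>V. g v \<in> \<rat> \<and> 0 \<le> g v \<and> g v \<le> 1)"

definition frac_list_assignment :: "'a set \<Rightarrow> ('a \<Rightarrow> real set) \<Rightarrow> bool" where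
  "frac_list_assignment V L \<longleftrightarrow> (\<forall>v\<in>V. L v \<in> sets lebesgue \<and> L v \<subseteq> {0..1})"

definition frac_coloring ::
  "'a set \<Rightarrow> 'a set set \<Rightarrow> ('a \<Rightarrow> real) \<Rightarrow> ('a \<Rightarrow> real set) \<Rightarrow> ('a \<Rightarrow> real set) \<Rightarrow> bool" where
  "frac_coloring V E g L \<phi> \<longleftrightarrow>
     (\<forall>v\<in>V. \<phi> v \<in> sets lebesgue \<and> \<phi> v \<subseteq> L v \<and> measure lebesgue (\<phi> v) \<ge> g v) \<and>
     (\<forall>u\<in>V. \<forall>v\<in>V. {u, v} \<in> E \<longrightarrow> \<phi> u \<inter> \<phi> v = {})"

end

theory Submission
  imports Defs
begin

(* For every edge e = uv of M choose greedily a set P e \<subseteq> L u \<inter> L v of measure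
   min (g u) (g v), or everything that is left of L u \<inter> L v if that is less, the sets P e being
   pairwise disjoint; both u and v receive P e.  It remains to give every vertex x a further set
   of measure g x - \<mu>(P e) (where x \<in> e; unmatched vertices keep g x) inside L x minus all the
   sets P e, now pairwise disjoint for all pairs of vertices.  A measure-theoretic Hall theorem
   reduces this to the Hall condition: the residual demands of any vertex set Y sum to at most the
   measure of the union of their residual lists.  If Y contains an edge e whose set P e is smaller
   than required, then L u \<inter> L v was used up entirely and (iii) gives the Hall condition;
   otherwise it follows from (i) at an unmatched vertex of Y or, if Y \<subseteq> V(M), from (ii) at a
   suitable endpoint in Y.

   Hall's theorem itself is proved by the Halmos-Vaughan induction: either some proper nonempty
   set of vertices is tight and the problem splits, or the initial segments L v \<inter> {..c} of a
   list can be given to v, with c increasing continuously until v is satisfied or some set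
   avoiding v becomes tight. *)

section \<open>Measurable subsets of the unit interval\<close>

lemma frac_list_assignment_fmeasurable:
  "frac_list_assignment X L \<Longrightarrow> x \<in> X \<Longrightarrow> L x \<in> fmeasurable lebesgue"
  unfolding frac_list_assignment_def
  by (blast intro: bounded_set_imp_lmeasurable bounded_subset[OF bounded_closed_interval])

lemma frac_list_assignment_Union:
  assumes "frac_list_assignment X L" "finite Y" "Y \<subseteq> X"
  shows "\<Union>(L ` Y) \<in> sets lebesgue" "\<Union>(L ` Y) \<in> fmeasurable lebesgue"
proof -
  show "\<Union>(L ` Y) \<in> sets lebesgue"
    using assms unfolding frac_list_assignment_def by (intro sets.finite_UN) auto
  moreover have "\<Union>(L ` Y) \<subseteq> {0..1}"
    using assms unfolding frac_list_assignment_def by auto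
  ultimately show "\<Union>(L ` Y) \<in> fmeasurable lebesgue"
    by (intro bounded_set_imp_lmeasurable bounded_subset[OF bounded_closed_interval])
qed

lemma frac_list_assignment_Diff:
  "frac_list_assignment X L \<Longrightarrow> A \<in> sets lebesgue \<Longrightarrow> frac_list_assignment X (\<lambda>x. L x - A)"
  unfolding frac_list_assignment_def by auto

lemma lipschitz_measure_Int_atMost:
  fixes E :: "real set"
  assumes E: "E \<in> fmeasurable lebesgue"
  shows "1-lipschitz_on UNIV (\<lambda>s. measure lebesgue (E \<inter> {..s}))"
proof -
  have le: "dist (measure lebesgue (E \<inter> {..s})) (measure lebesgue (E \<inter> {..t})) \<le> dist s t"
    if "s \<le> t" for s t :: real
  proof -
    have split: "E \<inter> {..t} = (E \<inter> {..s}) \<union> (E \<inter> {s<..t})"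
      using that by auto
    have A: "E \<inter> {..s} \<in> fmeasurable lebesgue" and B: "E \<inter> {s<..t} \<in> fmeasurable lebesgue"
      using E by (auto intro: fmeasurable_Int_fmeasurable)
    have "E \<inter> {s<..t} - E \<inter> {..s} = E \<inter> {s<..t}"
      by auto
    then have "measure lebesgue (E \<inter> {..t}) = measure lebesgue (E \<inter> {..s}) + measure lebesgue (E \<inter> {s<..t})"
      unfolding split using measure_Un2[OF A B] by simp
    moreover have "measure lebesgue (E \<inter> {s<..t}) \<le> measure lebesgue {s..t}"
      by (intro measure_mono_fmeasurable) (use E lmeasurable_compact in auto)
    ultimately show ?thesis
      using that by (simp add: dist_real_def)
  qed
  show ?thesis
  proof (rule lipschitz_onI)
    show "dist (measure lebesgue (E \<inter> {..s})) (measure lebesgue (E \<inter> {..t})) \<le> 1 * dist s t" for s t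
      using le[of s t] le[of t s] by (cases "s \<le> t") (simp_all add: dist_commute)
  qed simp
qed

lemma continuous_on_measure_Int_atMost:
  fixes E :: "real set"
  shows "E \<in> fmeasurable lebesgue \<Longrightarrow> continuous_on S (\<lambda>s. measure lebesgue (E \<inter> {..s}))"
  by (rule continuous_on_subset[OF lipschitz_on_continuous_on[OF lipschitz_measure_Int_atMost]]) auto

lemma measure_Int_atMost_mono:
  fixes E :: "real set"
  shows "E \<in> fmeasurable lebesgue \<Longrightarrow> s \<le> t \<Longrightarrow> measure lebesgue (E \<inter> {..s}) \<le> measure lebesgue (E \<inter> {..t})"
  by (intro measure_mono_fmeasurable fmeasurable_Int_fmeasurable) auto

lemma continuous_on_measure_Diff_Int_atMost:
  fixes A E :: "real set"
  assumes "A \<in> fmeasurable lebesgue" "E \<in> sets lebesgue"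
  shows "continuous_on S (\<lambda>s. measure lebesgue (A - E \<inter> {..s}))"
proof -
  have "measure lebesgue (A - E \<inter> {..s}) = measure lebesgue A - measure lebesgue ((A \<inter> E) \<inter> {..s})" for s
  proof -
    have "A - E \<inter> {..s} = A - (A \<inter> E) \<inter> {..s}"
      by blast
    moreover have "measure lebesgue (A - (A \<inter> E) \<inter> {..s}) = measure lebesgue A - measure lebesgue ((A \<inter> E) \<inter> {..s})"
      using assms by (intro measurable_measure_Diff) auto
    ultimately show ?thesis
      by simp
  qed
  moreover have "A \<inter> E \<in> fmeasurable lebesgue"
    using assms by (rule fmeasurable_Int_fmeasurable)
  ultimately show ?thesis
    by (simp add: continuous_on_diff continuous_on_measure_Int_atMost)
qed

lemma antimono_measure_Diff_Int_atMost:
  fixes A E :: "real set"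
  assumes "A \<in> fmeasurable lebesgue" "E \<in> sets lebesgue"
  shows "antimono (\<lambda>s. measure lebesgue (A - E \<inter> {..s}))"
  using assms by (intro antimonoI measure_mono_fmeasurable fmeasurable_Diff sets.Diff) auto

lemma measure_Int_atMost_eqE:
  fixes E :: "real set"
  assumes "E \<in> sets lebesgue" "E \<subseteq> {0..1}" "0 \<le> t" "t \<le> measure lebesgue E"
  obtains s where "-1 \<le> s" "s \<le> 1" "measure lebesgue (E \<inter> {..s}) = t"
proof -
  have "E \<inter> {..-1} = {}" "E \<inter> {..1} = E"
    using assms(2) by auto
  moreover have "continuous_on {-1..1} (\<lambda>s. measure lebesgue (E \<inter> {..s}))"
    using assms(1,2)
    by (intro continuous_on_measure_Int_atMost bounded_set_imp_lmeasurable bounded_subset[OF bounded_closed_interval])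
  ultimately show ?thesis
    using IVT'[of "\<lambda>s. measure lebesgue (E \<inter> {..s})" "-1" t 1] assms(3,4) that by auto
qed

lemma lebesgue_subset_truncatedE:
  fixes E :: "real set"
  assumes "E \<in> sets lebesgue" "E \<subseteq> {0..1}" "0 \<le> t"
  obtains F where "F \<in> sets lebesgue" "F \<subseteq> E" "measure lebesgue F \<le> t" "measure lebesgue F = t \<or> F = E"
proof (cases "measure lebesgue E \<le> t")
  case True
  then show ?thesis
    using that assms(1) by blast
next
  case False
  then obtain s where "measure lebesgue (E \<inter> {..s}) = t"
    using measure_Int_atMost_eqE[OF assms] by (metis linear)
  moreover have "E \<inter> {..s} \<in> sets lebesgue"
    using assms(1) by auto
  ultimately show ?thesis
    using that[of "E \<inter> {..s}"] by auto
qed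

lemma antimono_family_first_zero:
  fixes f :: "'i \<Rightarrow> real \<Rightarrow> real"
  assumes "finite I" "a \<le> b"
    and cont: "\<And>i. i \<in> I \<Longrightarrow> continuous_on {a..b} (f i)"
    and anti: "\<And>i. i \<in> I \<Longrightarrow> antimono (f i)"
    and start: "\<And>i. i \<in> I \<Longrightarrow> 0 \<le> f i a"
  obtains c where "a \<le> c" "c \<le> b" "\<And>i. i \<in> I \<Longrightarrow> 0 \<le> f i c" "c = b \<or> (\<exists>i\<in>I. f i c = 0)"
proof (cases "\<forall>i\<in>I. 0 \<le> f i b")
  case True
  then show ?thesis
    using that \<open>a \<le> b\<close> by blast
next
  case False
  define B where "B = {i \<in> I. f i b < 0}"
  have "\<exists>r. a \<le> r \<and> r \<le> b \<and> f i r = 0" if "i \<in> B" for i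
    using that IVT2'[of "f i" b 0 a] cont start \<open>a \<le> b\<close> unfolding B_def by auto
  then obtain r where r: "\<And>i. i \<in> B \<Longrightarrow> a \<le> r i \<and> r i \<le> b \<and> f i (r i) = 0"
    by metis
  have "finite B"
    using \<open>finite I\<close> unfolding B_def by simp
  have "B \<noteq> {}"
    using False unfolding B_def by (auto simp: not_le)
  define c where "c = Min (r ` B)"
  have "c \<in> r ` B"
    using \<open>finite B\<close> \<open>B \<noteq> {}\<close> unfolding c_def by simp
  then obtain i0 where i0: "i0 \<in> B" "c = r i0"
    by blast
  have "0 \<le> f i c" if "i \<in> I" for i
  proof (cases "i \<in> B")
    case True
    then have "c \<le> r i"
      using \<open>finite B\<close> unfolding c_def by simp
    then have "f i (r i) \<le> f i c"
      using anti[OF that] by (simp add: antimonoD)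
    then show ?thesis
      using r[OF True] by simp
  next
    case False
    have "c \<le> b"
      using r[OF i0(1)] i0(2) by simp
    then have "f i b \<le> f i c"
      using anti[OF that] by (simp add: antimonoD)
    then show ?thesis
      using False that unfolding B_def by simp
  qed
  moreover have "a \<le> c" "c \<le> b" "f i0 c = 0" "i0 \<in> I"
    using r[OF i0(1)] i0 unfolding B_def by auto
  ultimately show ?thesis
    using that by blast
qed

section \<open>A fractional Hall theorem\<close>

definition hall_condition :: "'a set \<Rightarrow> ('a \<Rightarrow> real set) \<Rightarrow> ('a \<Rightarrow> real) \<Rightarrow> bool" where
  "hall_condition X L g \<longleftrightarrow> (\<forall>Y\<subseteq>X. sum g Y \<le> measure lebesgue (\<Union>(L ` Y)))"

lemma hall_condition_subset:
  "hall_condition X L g \<Longrightarrow> Y \<subseteq> X \<Longrightarrow> hall_condition Y L g"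
  unfolding hall_condition_def by blast

lemma doubleton_in_complete_edges_iff:
  "u \<in> X \<Longrightarrow> v \<in> X \<Longrightarrow> {u, v} \<in> complete_edges X \<longleftrightarrow> u \<noteq> v"
  unfolding complete_edges_def by (auto simp: doubleton_eq_iff)

lemma frac_coloring_complete_edges_iff:
  "frac_coloring X (complete_edges X) g L \<phi> \<longleftrightarrow>
     (\<forall>x\<in>X. \<phi> x \<in> sets lebesgue \<and> \<phi> x \<subseteq> L x \<and> g x \<le> measure lebesgue (\<phi> x)) \<and>
     disjoint_family_on \<phi> X"
  unfolding frac_coloring_def disjoint_family_on_def
  by (auto simp: doubleton_in_complete_edges_iff)

lemma frac_coloring_extend_precoloring:
  assumes L: "frac_list_assignment V L" and "E \<subseteq> complete_edges V"
    and Q: "\<And>v. v \<in> V \<Longrightarrow> Q v \<in> sets lebesgue \<and> Q v \<subseteq> L v"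
    and Q_disjoint: "\<And>u v. u \<in> V \<Longrightarrow> v \<in> V \<Longrightarrow> {u, v} \<in> E \<Longrightarrow> Q u \<inter> Q v = {}"
    and \<phi>: "frac_coloring V (complete_edges V) (\<lambda>v. g v - measure lebesgue (Q v)) (\<lambda>v. L v - \<Union>(Q ` V)) \<phi>"
  shows "frac_coloring V E g L (\<lambda>v. \<phi> v \<union> Q v)"
proof -
  have \<phi>v: "\<phi> v \<in> sets lebesgue" "\<phi> v \<subseteq> L v - \<Union>(Q ` V)"
    "g v - measure lebesgue (Q v) \<le> measure lebesgue (\<phi> v)" if "v \<in> V" for v
    using \<phi> that unfolding frac_coloring_complete_edges_iff by simp_all
  have \<phi>_disjoint: "disjoint_family_on \<phi> V"
    using \<phi> unfolding frac_coloring_complete_edges_iff by simp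
  show ?thesis
    unfolding frac_coloring_def
  proof (intro conjI ballI impI)
    fix v assume "v \<in> V"
    show "\<phi> v \<union> Q v \<in> sets lebesgue" "\<phi> v \<union> Q v \<subseteq> L v"
      using \<phi>v[OF \<open>v \<in> V\<close>] Q[OF \<open>v \<in> V\<close>] by auto
    have Lv: "L v \<in> fmeasurable lebesgue"
      using L \<open>v \<in> V\<close> by (rule frac_list_assignment_fmeasurable)
    have "\<phi> v \<in> fmeasurable lebesgue" "Q v \<in> fmeasurable lebesgue"
      using fmeasurableI2[OF Lv] \<phi>v[OF \<open>v \<in> V\<close>] Q[OF \<open>v \<in> V\<close>] by blast+
    moreover have "Q v - \<phi> v = Q v"
      using \<phi>v(2)[OF \<open>v \<in> V\<close>] \<open>v \<in> V\<close> by blast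
    ultimately have "measure lebesgue (\<phi> v \<union> Q v) = measure lebesgue (\<phi> v) + measure lebesgue (Q v)"
      by (simp add: measure_Un2)
    then show "g v \<le> measure lebesgue (\<phi> v \<union> Q v)"
      using \<phi>v(3)[OF \<open>v \<in> V\<close>] by simp
  next
    fix u v assume "u \<in> V" "v \<in> V" "{u, v} \<in> E"
    then have "u \<noteq> v"
      using \<open>E \<subseteq> complete_edges V\<close> doubleton_in_complete_edges_iff[OF \<open>u \<in> V\<close> \<open>v \<in> V\<close>] by auto
    then have "\<phi> u \<inter> \<phi> v = {}"
      using \<phi>_disjoint \<open>u \<in> V\<close> \<open>v \<in> V\<close> unfolding disjoint_family_on_def by blast
    moreover have "\<phi> u \<inter> Q v = {}" "Q u \<inter> \<phi> v = {}"
      using \<phi>v(2)[OF \<open>u \<in> V\<close>] \<phi>v(2)[OF \<open>v \<in> V\<close>] \<open>u \<in> V\<close> \<open>v \<in> V\<close> by blast+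
    ultimately show "(\<phi> u \<union> Q u) \<inter> (\<phi> v \<union> Q v) = {}"
      using Q_disjoint[OF \<open>u \<in> V\<close> \<open>v \<in> V\<close> \<open>{u, v} \<in> E\<close>] by blast
  qed
qed

lemma frac_coloring_complete_edges_add_to_vertex:
  assumes "frac_list_assignment X L" "v \<in> X" "\<Phi> \<in> sets lebesgue" "\<Phi> \<subseteq> L v"
    and "frac_coloring X (complete_edges X) (g(v := g v - measure lebesgue \<Phi>)) (\<lambda>x. L x - \<Phi>) \<phi>"
  shows "frac_coloring X (complete_edges X) g L (\<lambda>x. \<phi> x \<union> (if x = v then \<Phi> else {}))"
proof -
  define Q where "Q x = (if x = v then \<Phi> else {})" for x
  have Q: "Q x \<in> sets lebesgue \<and> Q x \<subseteq> L x" for x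
    using assms(3,4) unfolding Q_def by auto
  have Q_disjoint: "Q x \<inter> Q y = {}" if "x \<in> X" "y \<in> X" "{x, y} \<in> complete_edges X" for x y
    using doubleton_in_complete_edges_iff[OF that(1,2)] that(3) unfolding Q_def by auto
  have "(\<lambda>x. g x - measure lebesgue (Q x)) = g(v := g v - measure lebesgue \<Phi>)"
    "(\<lambda>x. L x - \<Union>(Q ` X)) = (\<lambda>x. L x - \<Phi>)"
    using \<open>v \<in> X\<close> unfolding Q_def by auto
  then have "frac_coloring X (complete_edges X) g L (\<lambda>x. \<phi> x \<union> Q x)"
    using frac_coloring_extend_precoloring[OF assms(1) order_refl Q Q_disjoint] assms(5) by simp
  then show ?thesis
    unfolding Q_def .
qed

lemma frac_coloring_complete_edges_insert_null:
  assumes "frac_coloring (X - {v}) (complete_edges (X - {v})) g L \<phi>" "g v \<le> 0"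
  shows "frac_coloring X (complete_edges X) g L (\<phi>(v := {}))"
  using assms unfolding frac_coloring_complete_edges_iff disjoint_family_on_def by auto

lemma frac_coloring_complete_edges_combine:
  assumes \<phi>: "frac_coloring Y (complete_edges Y) g L \<phi>"
    and \<psi>: "frac_coloring (X - Y) (complete_edges (X - Y)) g (\<lambda>x. L x - \<Union>(L ` Y)) \<psi>"
  shows "frac_coloring X (complete_edges X) g L (\<lambda>x. if x \<in> Y then \<phi> x else \<psi> x)"
proof -
  have \<phi>x: "\<phi> x \<in> sets lebesgue" "\<phi> x \<subseteq> L x" "g x \<le> measure lebesgue (\<phi> x)" if "x \<in> Y" for x
    using \<phi> that unfolding frac_coloring_complete_edges_iff by simp_all
  have \<psi>x: "\<psi> x \<in> sets lebesgue" "\<psi> x \<subseteq> L x - \<Union>(L ` Y)" "g x \<le> measure lebesgue (\<psi> x)"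
    if "x \<in> X - Y" for x
    using \<psi> that unfolding frac_coloring_complete_edges_iff by simp_all
  have "\<phi> x \<inter> \<psi> y = {}" if "x \<in> Y" "y \<in> X - Y" for x y
    using \<phi>x(2)[OF that(1)] \<psi>x(2)[OF that(2)] that(1) by blast
  moreover have "disjoint_family_on \<phi> Y" "disjoint_family_on \<psi> (X - Y)"
    using \<phi> \<psi> unfolding frac_coloring_complete_edges_iff by simp_all
  ultimately have "disjoint_family_on (\<lambda>x. if x \<in> Y then \<phi> x else \<psi> x) X"
    unfolding disjoint_family_on_def by (auto simp: Int_commute)
  then show ?thesis
    unfolding frac_coloring_complete_edges_iff using \<phi>x \<psi>x by (auto simp: subset_iff)
qed

lemma hall_condition_residual:
  assumes "finite X" "frac_list_assignment X L" "hall_condition X L g" "Y \<subseteq> X"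
    and tight: "measure lebesgue (\<Union>(L ` Y)) \<le> sum g Y"
  shows "hall_condition (X - Y) (\<lambda>x. L x - \<Union>(L ` Y)) g"
  unfolding hall_condition_def
proof (intro allI impI)
  fix Z assume "Z \<subseteq> X - Y"
  then have "Z \<subseteq> X" "Z \<inter> Y = {}"
    by auto
  have fin: "finite Y" "finite Z"
    using \<open>Z \<subseteq> X\<close> \<open>Y \<subseteq> X\<close> \<open>finite X\<close> finite_subset by blast+
  have "sum g Z + sum g Y = sum g (Z \<union> Y)"
    using fin \<open>Z \<inter> Y = {}\<close> by (simp add: sum.union_disjoint)
  also have "\<dots> \<le> measure lebesgue (\<Union>(L ` (Z \<union> Y)))"
    using assms(3) \<open>Z \<subseteq> X\<close> \<open>Y \<subseteq> X\<close> unfolding hall_condition_def by blast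
  also have "\<Union>(L ` (Z \<union> Y)) = \<Union>(L ` Y) \<union> \<Union>(L ` Z)"
    by blast
  also have "measure lebesgue (\<Union>(L ` Y) \<union> \<Union>(L ` Z)) = measure lebesgue (\<Union>(L ` Y)) + measure lebesgue (\<Union>(L ` Z) - \<Union>(L ` Y))"
    using assms(2) fin \<open>Z \<subseteq> X\<close> \<open>Y \<subseteq> X\<close> by (intro measure_Un2 frac_list_assignment_Union(2))
  finally have "sum g Z \<le> measure lebesgue (\<Union>(L ` Z) - \<Union>(L ` Y))"
    using tight by linarith
  moreover have "(\<Union>x\<in>Z. L x - \<Union>(L ` Y)) = \<Union>(L ` Z) - \<Union>(L ` Y)"
    by blast
  ultimately show "sum g Z \<le> measure lebesgue (\<Union>x\<in>Z. L x - \<Union>(L ` Y))"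
    by simp
qed

lemma frac_coloring_complete_edges_tight_split:
  assumes "finite X" "frac_list_assignment X L" "hall_condition X L g"
    and "Y \<subseteq> X" "Y \<noteq> {}" "Y \<noteq> X" and tight: "measure lebesgue (\<Union>(L ` Y)) \<le> sum g Y"
    and IH: "\<And>Z L'. Z \<subset> X \<Longrightarrow> frac_list_assignment X L' \<Longrightarrow> hall_condition Z L' g \<Longrightarrow>
      \<exists>\<phi>. frac_coloring Z (complete_edges Z) g L' \<phi>"
  shows "\<exists>\<phi>. frac_coloring X (complete_edges X) g L \<phi>"
proof -
  obtain \<phi> where "frac_coloring Y (complete_edges Y) g L \<phi>"
    using IH[of Y L] assms(2-6) hall_condition_subset by blast
  moreover obtain \<psi> where "frac_coloring (X - Y) (complete_edges (X - Y)) g (\<lambda>x. L x - \<Union>(L ` Y)) \<psi>"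
  proof -
    have "frac_list_assignment X (\<lambda>x. L x - \<Union>(L ` Y))"
      using assms(2) frac_list_assignment_Union(1)[OF assms(2) finite_subset[OF assms(4,1)] assms(4)]
      by (rule frac_list_assignment_Diff)
    moreover have "X - Y \<subset> X"
      using assms(4,5) by blast
    ultimately show ?thesis
      using IH hall_condition_residual[OF assms(1-4) tight] that by blast
  qed
  ultimately show ?thesis
    using frac_coloring_complete_edges_combine by blast
qed

lemma hall_condition_remove_from_lists:
  assumes "finite X" "frac_list_assignment X L" "hall_condition X L g" "v \<in> X"
    and "\<Phi> \<in> sets lebesgue" "\<Phi> \<subseteq> L v"
    and others: "\<And>Y. Y \<subseteq> X - {v} \<Longrightarrow> sum g Y \<le> measure lebesgue (\<Union>(L ` Y) - \<Phi>)"
  shows "hall_condition X (\<lambda>x. L x - \<Phi>) (g(v := g v - measure lebesgue \<Phi>))"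
  unfolding hall_condition_def
proof (intro allI impI)
  fix Y assume "Y \<subseteq> X"
  then have "finite Y"
    using \<open>finite X\<close> finite_subset by blast
  have UN_eq: "(\<Union>x\<in>Y. L x - \<Phi>) = \<Union>(L ` Y) - \<Phi>"
    by blast
  show "sum (g(v := g v - measure lebesgue \<Phi>)) Y \<le> measure lebesgue (\<Union>x\<in>Y. L x - \<Phi>)"
  proof (cases "v \<in> Y")
    case True
    have "sum (g(v := g v - measure lebesgue \<Phi>)) Y = sum g Y - measure lebesgue \<Phi>"
      using \<open>finite Y\<close> True by (simp add: sum.remove)
    also have "\<dots> \<le> measure lebesgue (\<Union>(L ` Y)) - measure lebesgue \<Phi>"
      using assms(3) \<open>Y \<subseteq> X\<close> unfolding hall_condition_def by simp
    also have "\<dots> = measure lebesgue (\<Union>(L ` Y) - \<Phi>)"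
      using frac_list_assignment_Union(2)[OF assms(2) \<open>finite Y\<close> \<open>Y \<subseteq> X\<close>] assms(5,6) True
      by (subst measurable_measure_Diff) auto
    finally show ?thesis
      unfolding UN_eq .
  next
    case False
    then have "sum (g(v := g v - measure lebesgue \<Phi>)) Y = sum g Y"
      by (intro sum.cong) auto
    then show ?thesis
      using others[of Y] False \<open>Y \<subseteq> X\<close> unfolding UN_eq by auto
  qed
qed

lemma hall_condition_first_tight_cut:
  assumes "finite X" and L: "frac_list_assignment X L" and hall: "hall_condition X L g"
    and "v \<in> X" "-1 \<le> s1"
  obtains c where "c \<le> s1" "\<And>Y. Y \<subseteq> X - {v} \<Longrightarrow> sum g Y \<le> measure lebesgue (\<Union>(L ` Y) - L v \<inter> {..c})"
    "c = s1 \<or> (\<exists>Y. Y \<subseteq> X - {v} \<and> Y \<noteq> {} \<and> measure lebesgue (\<Union>(L ` Y) - L v \<inter> {..c}) = sum g Y)"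
proof -
  have Lv: "L v \<in> sets lebesgue" "L v \<subseteq> {0..1}"
    using L \<open>v \<in> X\<close> unfolding frac_list_assignment_def by auto
  define slack where "slack Y s = measure lebesgue (\<Union>(L ` Y) - L v \<inter> {..s}) - sum g Y" for Y s
  define \<Y> where "\<Y> = {Y. Y \<subseteq> X - {v} \<and> Y \<noteq> {}}"
  have UY: "\<Union>(L ` Y) \<in> fmeasurable lebesgue" if "Y \<in> \<Y>" for Y
    using that \<open>finite X\<close> finite_subset unfolding \<Y>_def
    by (intro frac_list_assignment_Union(2)[OF L]) auto
  have "finite \<Y>"
    using \<open>finite X\<close> unfolding \<Y>_def by (simp add: finite_subset[of _ "Pow X"] subset_iff)
  moreover have "continuous_on {-1..s1} (slack Y)" if "Y \<in> \<Y>" for Y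
    unfolding slack_def using UY[OF that] Lv(1)
    by (intro continuous_on_diff continuous_on_const continuous_on_measure_Diff_Int_atMost)
  moreover have "antimono (slack Y)" if "Y \<in> \<Y>" for Y
    using antimono_measure_Diff_Int_atMost[OF UY[OF that] Lv(1)]
    unfolding slack_def antimono_def by simp
  moreover have "0 \<le> slack Y (-1)" if "Y \<in> \<Y>" for Y
  proof -
    have "L v \<inter> {..-1} = {}"
      using Lv(2) by auto
    moreover have "sum g Y \<le> measure lebesgue (\<Union>(L ` Y))"
      using hall that unfolding hall_condition_def \<Y>_def by blast
    ultimately show ?thesis
      unfolding slack_def by simp
  qed
  ultimately obtain c where c: "-1 \<le> c" "c \<le> s1" "\<And>Y. Y \<in> \<Y> \<Longrightarrow> 0 \<le> slack Y c"
    "c = s1 \<or> (\<exists>Y\<in>\<Y>. slack Y c = 0)"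
    using antimono_family_first_zero[of \<Y> "-1" s1 slack] \<open>-1 \<le> s1\<close> by blast
  show ?thesis
  proof (rule that[OF c(2)])
    show "sum g Y \<le> measure lebesgue (\<Union>(L ` Y) - L v \<inter> {..c})" if "Y \<subseteq> X - {v}" for Y
      using that c(3)[of Y] unfolding slack_def \<Y>_def by (cases "Y = {}") auto
    show "c = s1 \<or> (\<exists>Y. Y \<subseteq> X - {v} \<and> Y \<noteq> {} \<and> measure lebesgue (\<Union>(L ` Y) - L v \<inter> {..c}) = sum g Y)"
      using c(4) unfolding slack_def \<Y>_def by auto
  qed
qed

lemma hall_condition_reduce_at_vertex:
  assumes "finite X" and L: "frac_list_assignment X L" and "\<forall>x\<in>X. 0 \<le> g x"
    and hall: "hall_condition X L g" and "v \<in> X"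
  obtains \<Phi> where "\<Phi> \<in> sets lebesgue" "\<Phi> \<subseteq> L v" "measure lebesgue \<Phi> \<le> g v"
    "hall_condition X (\<lambda>x. L x - \<Phi>) (g(v := g v - measure lebesgue \<Phi>))"
    "measure lebesgue \<Phi> = g v \<or>
       (\<exists>Y. Y \<subseteq> X - {v} \<and> Y \<noteq> {} \<and> measure lebesgue (\<Union>x\<in>Y. L x - \<Phi>) \<le> sum g Y)"
proof -
  have Lv: "L v \<in> sets lebesgue" "L v \<subseteq> {0..1}" "L v \<in> fmeasurable lebesgue"
    using L \<open>v \<in> X\<close> frac_list_assignment_fmeasurable unfolding frac_list_assignment_def by auto
  have "sum g {v} \<le> measure lebesgue (\<Union>(L ` {v}))"
    using hall \<open>v \<in> X\<close> unfolding hall_condition_def by blast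
  then have "g v \<le> measure lebesgue (L v)"
    by simp
  then obtain s1 where s1: "-1 \<le> s1" "measure lebesgue (L v \<inter> {..s1}) = g v"
    using measure_Int_atMost_eqE[OF Lv(1,2)] \<open>v \<in> X\<close> assms(3) by metis
  then obtain c where c: "c \<le> s1" "\<And>Y. Y \<subseteq> X - {v} \<Longrightarrow> sum g Y \<le> measure lebesgue (\<Union>(L ` Y) - L v \<inter> {..c})"
    "c = s1 \<or> (\<exists>Y. Y \<subseteq> X - {v} \<and> Y \<noteq> {} \<and> measure lebesgue (\<Union>(L ` Y) - L v \<inter> {..c}) = sum g Y)"
    using hall_condition_first_tight_cut[OF \<open>finite X\<close> L hall \<open>v \<in> X\<close>] by blast
  define \<Phi> where "\<Phi> = L v \<inter> {..c}"
  have \<Phi>: "\<Phi> \<in> sets lebesgue" "\<Phi> \<subseteq> L v"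
    using Lv(1) unfolding \<Phi>_def by auto
  have "measure lebesgue \<Phi> \<le> g v"
    using measure_Int_atMost_mono[OF Lv(3) c(1)] s1(2) unfolding \<Phi>_def by simp
  moreover have "hall_condition X (\<lambda>x. L x - \<Phi>) (g(v := g v - measure lebesgue \<Phi>))"
    using c(2) unfolding \<Phi>_def
    by (rule hall_condition_remove_from_lists[OF \<open>finite X\<close> L hall \<open>v \<in> X\<close> \<Phi>[unfolded \<Phi>_def]])
  moreover have "(\<Union>x\<in>Y. L x - \<Phi>) = \<Union>(L ` Y) - \<Phi>" for Y
    by blast
  then have "measure lebesgue \<Phi> = g v \<or>
       (\<exists>Y. Y \<subseteq> X - {v} \<and> Y \<noteq> {} \<and> measure lebesgue (\<Union>x\<in>Y. L x - \<Phi>) \<le> sum g Y)"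
    using c(3) s1(2) unfolding \<Phi>_def by (metis order_refl)
  ultimately show ?thesis
    by (rule that[OF \<Phi>])
qed

theorem frac_coloring_complete_edges_if_hall:
  assumes "finite X" "frac_list_assignment X L" "\<forall>x\<in>X. 0 \<le> g x" "hall_condition X L g"
  shows "\<exists>\<phi>. frac_coloring X (complete_edges X) g L \<phi>"
  using assms
proof (induction X arbitrary: L g rule: finite_psubset_induct)
  case (psubset X)
  show ?case
  proof (cases "X = {}")
    case True
    then show ?thesis
      by (simp add: frac_coloring_complete_edges_iff disjoint_family_on_def)
  next
    case False
    then obtain v where "v \<in> X"
      by blast
    obtain \<Phi> where \<Phi>: "\<Phi> \<in> sets lebesgue" "\<Phi> \<subseteq> L v" "measure lebesgue \<Phi> \<le> g v"
      and hall: "hall_condition X (\<lambda>x. L x - \<Phi>) (g(v := g v - measure lebesgue \<Phi>))"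
      and outcome: "measure lebesgue \<Phi> = g v \<or>
        (\<exists>Y. Y \<subseteq> X - {v} \<and> Y \<noteq> {} \<and> measure lebesgue (\<Union>x\<in>Y. L x - \<Phi>) \<le> sum g Y)"
      using hall_condition_reduce_at_vertex[OF psubset.hyps psubset.prems \<open>v \<in> X\<close>] by blast
    define L' where "L' x = L x - \<Phi>" for x
    define g' where "g' = g(v := g v - measure lebesgue \<Phi>)"
    have L': "frac_list_assignment X L'"
      unfolding L'_def using psubset.prems(1) \<Phi>(1) by (rule frac_list_assignment_Diff)
    have IH: "\<exists>\<phi>. frac_coloring Z (complete_edges Z) g' K \<phi>"
      if "Z \<subset> X" "frac_list_assignment X K" "hall_condition Z K g'" for Z K
    proof (rule psubset.IH[OF that(1)])
      show "frac_list_assignment Z K"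
        using that(1,2) unfolding frac_list_assignment_def by blast
      show "\<forall>x\<in>Z. 0 \<le> g' x"
        using that(1) psubset.prems(2) \<Phi>(3) unfolding g'_def by auto
    qed (rule that(3))
    have "\<exists>\<phi>. frac_coloring X (complete_edges X) g' L' \<phi>"
      using outcome
    proof (elim disjE exE conjE)
      assume "measure lebesgue \<Phi> = g v"
      moreover obtain \<phi> where "frac_coloring (X - {v}) (complete_edges (X - {v})) g' L' \<phi>"
        using IH[of "X - {v}" L'] \<open>v \<in> X\<close> L' hall hall_condition_subset
        unfolding L'_def g'_def by blast
      ultimately show ?thesis
        using frac_coloring_complete_edges_insert_null unfolding g'_def by fastforce
    next
      fix Y assume Y: "Y \<subseteq> X - {v}" "Y \<noteq> {}" "measure lebesgue (\<Union>x\<in>Y. L x - \<Phi>) \<le> sum g Y"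
      have "sum g' Y = sum g Y"
        using Y(1) unfolding g'_def by (intro sum.cong) auto
      then have "measure lebesgue (\<Union>(L' ` Y)) \<le> sum g' Y"
        using Y(3) unfolding L'_def by simp
      moreover have "Y \<subseteq> X" "Y \<noteq> X"
        using Y(1) \<open>v \<in> X\<close> by auto
      ultimately show ?thesis
        using frac_coloring_complete_edges_tight_split[OF psubset.hyps L' _ _ Y(2)] hall IH
        unfolding L'_def g'_def by blast
    qed
    then show ?thesis
      unfolding L'_def g'_def using frac_coloring_complete_edges_add_to_vertex[OF psubset.prems(1) \<open>v \<in> X\<close> \<Phi>(1,2)]
      by blast
  qed
qed

section \<open>Colours shared along a matching\<close>

lemma disjoint_subsets_saturating:
  fixes I :: "'i \<Rightarrow> real set"
  assumes "finite M" and I: "\<forall>e\<in>M. I e \<in> sets lebesgue \<and> I e \<subseteq> {0..1}" and b: "\<forall>e\<in>M. 0 \<le> b e"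
  shows "\<exists>P. disjoint_family_on P M \<and>
    (\<forall>e\<in>M. P e \<in> sets lebesgue \<and> P e \<subseteq> I e \<and> measure lebesgue (P e) \<le> b e \<and>
       (measure lebesgue (P e) = b e \<or> I e \<subseteq> \<Union>(P ` M)))"
  using assms
proof (induction M rule: finite_induct)
  case empty
  then show ?case
    by (simp add: disjoint_family_on_def)
next
  case (insert e M)
  then obtain P where P_disjoint: "disjoint_family_on P M"
    and P: "\<forall>e\<in>M. P e \<in> sets lebesgue \<and> P e \<subseteq> I e \<and> measure lebesgue (P e) \<le> b e \<and>
       (measure lebesgue (P e) = b e \<or> I e \<subseteq> \<Union>(P ` M))"
    by auto
  have "\<Union>(P ` M) \<in> sets lebesgue"
    using P \<open>finite M\<close> by (intro sets.finite_UN) auto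
  then have "I e - \<Union>(P ` M) \<in> sets lebesgue" "I e - \<Union>(P ` M) \<subseteq> {0..1}"
    using insert.prems by auto
  then obtain F where F: "F \<in> sets lebesgue" "F \<subseteq> I e - \<Union>(P ` M)" "measure lebesgue F \<le> b e"
    "measure lebesgue F = b e \<or> F = I e - \<Union>(P ` M)"
    using lebesgue_subset_truncatedE insert.prems(2) by (metis insertI1)
  have UN_eq: "\<Union>(P(e := F) ` insert e M) = F \<union> \<Union>(P ` M)"
    using \<open>e \<notin> M\<close> by auto
  show ?case
  proof (intro exI[of _ "P(e := F)"] conjI ballI)
    have "disjoint_family_on (P(e := F)) M" "F \<inter> \<Union>(P(e := F) ` M) = {}"
      using P_disjoint F(2) \<open>e \<notin> M\<close> unfolding disjoint_family_on_def by auto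
    then show "disjoint_family_on (P(e := F)) (insert e M)"
      using \<open>e \<notin> M\<close> by (simp add: disjoint_family_on_insert)
    fix x assume "x \<in> insert e M"
    then show "(P(e := F)) x \<in> sets lebesgue" "(P(e := F)) x \<subseteq> I x" "measure lebesgue ((P(e := F)) x) \<le> b x"
      "measure lebesgue ((P(e := F)) x) = b x \<or> I x \<subseteq> \<Union>(P(e := F) ` insert e M)"
      unfolding UN_eq using F P by auto
  qed
qed

lemma is_matching_edgeE:
  assumes "is_matching V M" "e \<in> M"
  obtains u v where "e = {u, v}" "u \<noteq> v" "u \<in> V" "v \<in> V"
  using assms unfolding is_matching_def complete_edges_def by blast

lemma is_matching_edges_at:
  "is_matching V M \<Longrightarrow> e \<in> M \<Longrightarrow> x \<in> e \<Longrightarrow> {e' \<in> M. x \<in> e'} = {e}"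
  unfolding is_matching_def by blast

lemma finite_is_matching:
  assumes "finite V" "is_matching V M"
  shows "finite M"
proof -
  have "M \<subseteq> Pow V"
    using assms(2) unfolding is_matching_def complete_edges_def by auto
  then show ?thesis
    using assms(1) by (simp add: finite_subset)
qed

lemma sum_split_matching:
  assumes "finite V" "is_matching V M" "Y \<subseteq> V"
  shows "sum h Y = sum h (Y - \<Union>M) + (\<Sum>e\<in>M. sum h (Y \<inter> e))"
proof -
  have "finite M"
    using assms(1,2) by (rule finite_is_matching)
  have "finite Y"
    using assms(3,1) by (rule finite_subset)
  have "sum h (Y \<inter> \<Union>M) = (\<Sum>e\<in>M. sum h (Y \<inter> e))"
    unfolding Int_Union
  proof (rule sum.UNION_disjoint)
    show "\<forall>e\<in>M. \<forall>e'\<in>M. e \<noteq> e' \<longrightarrow> Y \<inter> e \<inter> (Y \<inter> e') = {}"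
      using assms(2) unfolding is_matching_def by blast
  qed (use \<open>finite M\<close> \<open>finite Y\<close> in auto)
  moreover have "sum h Y = sum h (Y \<inter> \<Union>M) + sum h (Y - \<Union>M)"
    using \<open>finite Y\<close> by (rule sum.Int_Diff)
  ultimately show ?thesis
    by (simp add: add.commute)
qed

lemma edge_residual_sum_le:
  fixes g :: "'a \<Rightarrow> real"
  assumes "u \<noteq> v" "s \<le> min (g u) (g v)" "{u, v} \<subseteq> Y \<Longrightarrow> s = min (g u) (g v)" "Y \<inter> {u, v} \<noteq> {}"
  obtains x where "x \<in> Y \<inter> {u, v}" "(\<Sum>y\<in>Y \<inter> {u, v}. g y - s) \<le> g x - s"
proof -
  consider "u \<in> Y" "v \<in> Y" | "u \<in> Y" "v \<notin> Y" | "u \<notin> Y" "v \<in> Y"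
    using assms(4) by blast
  then show ?thesis
  proof cases
    case 1
    then have "(\<Sum>y\<in>Y \<inter> {u, v}. g y - s) = max (g u) (g v) - s"
      using assms(1,3) by (simp add: Int_absorb1)
    then show ?thesis
      using that 1 by (cases "g u \<le> g v") (auto simp: max_def)
  qed (use that in \<open>auto simp: Int_insert_right\<close>)
qed

locale shared_colors =
  fixes V :: "'a set" and M :: "'a set set" and g :: "'a \<Rightarrow> real" and L :: "'a \<Rightarrow> real set"
    and P :: "'a set \<Rightarrow> real set"
  assumes finite_V: "finite V" and matching: "is_matching V M"
    and demand_nonneg: "\<forall>v\<in>V. 0 \<le> g v" and lists: "frac_list_assignment V L"
    and P_disjoint: "disjoint_family_on P M"
    and P: "\<forall>e\<in>M. P e \<in> sets lebesgue \<and> P e \<subseteq> \<Inter>(L ` e) \<and> measure lebesgue (P e) \<le> Min (g ` e) \<and>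
      (measure lebesgue (P e) = Min (g ` e) \<or> \<Inter>(L ` e) \<subseteq> \<Union>(P ` M))"
    and cond_unmatched: "\<forall>v\<in>V - \<Union>M. measure lebesgue (L v) \<ge>
      (\<Sum>u\<in>V - \<Union>M. g u) + (\<Sum>e\<in>M. Max (g ` e))"
    and cond_matched: "\<forall>v\<in>\<Union>M. measure lebesgue (L v) \<ge> g v + (\<Sum>e\<in>{e\<in>M. v \<notin> e}. Max (g ` e))"
    and cond_edge: "\<forall>u v. {u, v} \<in> M \<longrightarrow> measure lebesgue (L u) + measure lebesgue (L v) \<ge> (\<Sum>w\<in>V. g w)"
begin

definition shared :: "'a \<Rightarrow> real set" where
  "shared x = \<Union>(P ` {e \<in> M. x \<in> e})"

definition residual_demand :: "'a \<Rightarrow> real" where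
  "residual_demand x = g x - measure lebesgue (shared x)"

definition residual_list :: "'a \<Rightarrow> real set" where
  "residual_list x = L x - \<Union>(P ` M)"

lemma finite_M: "finite M"
  using finite_V matching by (rule finite_is_matching)

lemma shared_edge: "e \<in> M \<Longrightarrow> x \<in> e \<Longrightarrow> shared x = P e"
  unfolding shared_def using is_matching_edges_at[OF matching] by simp

lemma shared_unmatched: "x \<notin> \<Union>M \<Longrightarrow> shared x = {}"
  unfolding shared_def by auto

lemma UN_shared: "\<Union>(shared ` V) = \<Union>(P ` M)"
proof
  show "\<Union>(shared ` V) \<subseteq> \<Union>(P ` M)"
    unfolding shared_def by blast
  show "\<Union>(P ` M) \<subseteq> \<Union>(shared ` V)"
  proof
    fix t assume "t \<in> \<Union>(P ` M)"
    then obtain e where "e \<in> M" "t \<in> P e"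
      by blast
    moreover obtain u v where "e = {u, v}" "u \<in> V"
      using is_matching_edgeE[OF matching \<open>e \<in> M\<close>] by metis
    ultimately show "t \<in> \<Union>(shared ` V)"
      using shared_edge[of e u] by auto
  qed
qed

lemma P_edge:
  assumes "e \<in> M" "e = {u, v}"
  shows "P e \<in> sets lebesgue" "P e \<subseteq> L u \<inter> L v" "measure lebesgue (P e) \<le> min (g u) (g v)"
    "measure lebesgue (P e) = min (g u) (g v) \<or> L u \<inter> L v \<subseteq> \<Union>(P ` M)"
  using P assms by auto

lemma shared_in_list: "x \<in> V \<Longrightarrow> shared x \<in> sets lebesgue \<and> shared x \<subseteq> L x"
proof (cases "x \<in> \<Union>M")
  case True
  then obtain e where "e \<in> M" "x \<in> e"
    by blast
  then show ?thesis
    using P shared_edge by (metis Inter_lower image_eqI subset_trans)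
qed (simp add: shared_unmatched)

lemma shared_disjoint:
  assumes "x \<in> V" "y \<in> V" "{x, y} \<in> complete_edges V - M"
  shows "shared x \<inter> shared y = {}"
proof (cases "x \<in> \<Union>M \<and> y \<in> \<Union>M")
  case True
  then obtain e e' where e: "e \<in> M" "x \<in> e" and e': "e' \<in> M" "y \<in> e'"
    by blast
  have "x \<noteq> y"
    using doubleton_in_complete_edges_iff[OF assms(1,2)] assms(3) by blast
  have "e \<noteq> e'"
  proof
    assume "e = e'"
    obtain u v where "e = {u, v}"
      using is_matching_edgeE[OF matching \<open>e \<in> M\<close>] by metis
    then have "{x, y} = e"
      using e e' \<open>e = e'\<close> \<open>x \<noteq> y\<close> by auto
    then show False
      using assms(3) \<open>e \<in> M\<close> by blast
  qed
  then show ?thesis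
    using P_disjoint e e' shared_edge unfolding disjoint_family_on_def by metis
next
  case False
  then show ?thesis
    using shared_unmatched by auto
qed

lemma residual_demand_nonneg: "x \<in> V \<Longrightarrow> 0 \<le> residual_demand x"
proof (cases "x \<in> \<Union>M")
  case True
  then obtain e where "e \<in> M" "x \<in> e"
    by blast
  moreover obtain u v where "e = {u, v}"
    using is_matching_edgeE[OF matching \<open>e \<in> M\<close>] by metis
  ultimately show ?thesis
    unfolding residual_demand_def using P_edge(3) shared_edge by fastforce
qed (use demand_nonneg shared_unmatched residual_demand_def in auto)

lemma sum_residual_demand:
  assumes "Y \<subseteq> V"
  shows "sum residual_demand Y = sum g (Y - \<Union>M) + (\<Sum>e\<in>M. \<Sum>x\<in>Y \<inter> e. g x - measure lebesgue (P e))"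
proof -
  have "sum residual_demand Y = sum residual_demand (Y - \<Union>M) + (\<Sum>e\<in>M. sum residual_demand (Y \<inter> e))"
    by (rule sum_split_matching[OF finite_V matching assms])
  also have "sum residual_demand (Y - \<Union>M) = sum g (Y - \<Union>M)"
    by (intro sum.cong) (auto simp: residual_demand_def shared_unmatched)
  also have "(\<Sum>e\<in>M. sum residual_demand (Y \<inter> e)) = (\<Sum>e\<in>M. \<Sum>x\<in>Y \<inter> e. g x - measure lebesgue (P e))"
    by (intro sum.cong) (auto simp: residual_demand_def shared_edge)
  finally show ?thesis .
qed

lemma sum_measure_shared: "(\<Sum>x\<in>V. measure lebesgue (shared x)) = 2 * (\<Sum>e\<in>M. measure lebesgue (P e))"
proof -
  have edge: "(\<Sum>x\<in>V \<inter> e. measure lebesgue (shared x)) = 2 * measure lebesgue (P e)" if "e \<in> M" for e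
  proof -
    obtain u v where "e = {u, v}" "u \<noteq> v" "u \<in> V" "v \<in> V"
      using is_matching_edgeE[OF matching \<open>e \<in> M\<close>] by metis
    then have "(\<Sum>x\<in>V \<inter> e. measure lebesgue (shared x)) = (\<Sum>x\<in>{u, v}. measure lebesgue (P e))"
      using shared_edge[OF that] by (intro sum.cong) auto
    then show ?thesis
      using \<open>u \<noteq> v\<close> by simp
  qed
  have "(\<Sum>x\<in>V. measure lebesgue (shared x)) = (\<Sum>x\<in>V - \<Union>M. measure lebesgue (shared x))
      + (\<Sum>e\<in>M. \<Sum>x\<in>V \<inter> e. measure lebesgue (shared x))"
    by (rule sum_split_matching[OF finite_V matching order_refl])
  also have "(\<Sum>x\<in>V - \<Union>M. measure lebesgue (shared x)) = 0"
    by (intro sum.neutral) (auto simp: shared_unmatched)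
  also have "(\<Sum>e\<in>M. \<Sum>x\<in>V \<inter> e. measure lebesgue (shared x)) = (\<Sum>e\<in>M. 2 * measure lebesgue (P e))"
    using edge by (rule sum.cong[OF refl])
  finally show ?thesis
    by (metis add_0 sum_distrib_left)
qed

lemma UN_P_fmeasurable: "\<Union>(P ` M) \<in> fmeasurable lebesgue"
proof (rule fmeasurableI2)
  show "\<Union>(L ` V) \<in> fmeasurable lebesgue"
    using lists finite_V by (rule frac_list_assignment_Union(2)) simp
  show "\<Union>(P ` M) \<subseteq> \<Union>(L ` V)"
    unfolding UN_shared[symmetric] using shared_in_list by blast
  show "\<Union>(P ` M) \<in> sets lebesgue"
    using finite_M P by (intro sets.finite_UN) auto
qed

lemma measure_UN_P_le: "measure lebesgue (\<Union>(P ` M)) \<le> (\<Sum>e\<in>M. measure lebesgue (P e))"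
  using finite_M P by (intro measure_UNION_le) auto

lemma measure_residual_lists_ge:
  assumes "Y \<subseteq> V" "A \<subseteq> \<Union>(L ` Y)" "A \<in> sets lebesgue"
  shows "measure lebesgue A - (\<Sum>e\<in>M. measure lebesgue (P e)) \<le> measure lebesgue (\<Union>(residual_list ` Y))"
proof -
  have UY: "\<Union>(L ` Y) \<in> fmeasurable lebesgue"
    using lists finite_subset[OF assms(1) finite_V] assms(1) by (rule frac_list_assignment_Union(2))
  then have "A \<in> fmeasurable lebesgue"
    using assms(2,3) by (rule fmeasurableI2)
  then have "measure lebesgue A \<le> measure lebesgue ((A - \<Union>(P ` M)) \<union> \<Union>(P ` M))"
    using UN_P_fmeasurable by (intro measure_mono_fmeasurable fmeasurable.Un fmeasurable_Diff) auto
  also have "\<dots> \<le> measure lebesgue (A - \<Union>(P ` M)) + measure lebesgue (\<Union>(P ` M))"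
    using \<open>A \<in> fmeasurable lebesgue\<close> UN_P_fmeasurable by (intro measure_Un_le) auto
  finally have "measure lebesgue A \<le> measure lebesgue (A - \<Union>(P ` M)) + measure lebesgue (\<Union>(P ` M))" .
  moreover have "\<Union>(residual_list ` Y) = \<Union>(L ` Y) - \<Union>(P ` M)"
    unfolding residual_list_def by blast
  then have "measure lebesgue (A - \<Union>(P ` M)) \<le> measure lebesgue (\<Union>(residual_list ` Y))"
    using assms(2) \<open>A \<in> fmeasurable lebesgue\<close> UY UN_P_fmeasurable
    by (intro measure_mono_fmeasurable) (auto simp: fmeasurable_Diff fmeasurableD)
  ultimately show ?thesis
    using measure_UN_P_le by linarith
qed

lemma hall_residual_unsaturated_edge:
  assumes "Y \<subseteq> V" "e \<in> M" "e \<subseteq> Y" "measure lebesgue (P e) \<noteq> Min (g ` e)"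
  shows "sum residual_demand Y \<le> measure lebesgue (\<Union>(residual_list ` Y))"
proof -
  obtain u v where uv: "e = {u, v}" "u \<in> V" "v \<in> V"
    using is_matching_edgeE[OF matching \<open>e \<in> M\<close>] by metis
  have Lu: "L u \<in> fmeasurable lebesgue" and Lv: "L v \<in> fmeasurable lebesgue"
    using frac_list_assignment_fmeasurable[OF lists] uv(2,3) by auto
  have "measure lebesgue (P e) \<noteq> min (g u) (g v)"
    using assms(4) uv(1) by simp
  then have "L u \<inter> L v \<subseteq> \<Union>(P ` M)"
    using P_edge(4)[OF \<open>e \<in> M\<close> uv(1)] by blast
  then have "measure lebesgue (L u \<inter> L v) \<le> measure lebesgue (\<Union>(P ` M))"
    using Lu Lv UN_P_fmeasurable by (intro measure_mono_fmeasurable sets.Int fmeasurableD)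
  moreover have "measure lebesgue (L u \<union> L v) = measure lebesgue (L u) + measure lebesgue (L v) - measure lebesgue (L u \<inter> L v)"
    using Lu Lv by (rule measure_Un3)
  moreover have "(\<Sum>w\<in>V. g w) \<le> measure lebesgue (L u) + measure lebesgue (L v)"
    using cond_edge \<open>e \<in> M\<close> uv(1) by blast
  moreover have "measure lebesgue (L u \<union> L v) - (\<Sum>e\<in>M. measure lebesgue (P e))
      \<le> measure lebesgue (\<Union>(residual_list ` Y))"
  proof (rule measure_residual_lists_ge[OF assms(1)])
    show "L u \<union> L v \<subseteq> \<Union>(L ` Y)"
      using assms(3) uv(1) by blast
    show "L u \<union> L v \<in> sets lebesgue"
      using Lu Lv by (intro sets.Un fmeasurableD)
  qed
  moreover have "sum residual_demand Y \<le> sum residual_demand V"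
    using finite_V assms(1) residual_demand_nonneg by (intro sum_mono2) auto
  moreover have "sum residual_demand V = sum g V - 2 * (\<Sum>e\<in>M. measure lebesgue (P e))"
    by (simp add: residual_demand_def sum_subtractf sum_measure_shared)
  ultimately show ?thesis
    using measure_UN_P_le by linarith
qed

lemma residual_edge_sum_le:
  assumes "e \<in> M" "Y \<inter> e \<noteq> {}" "e \<subseteq> Y \<Longrightarrow> measure lebesgue (P e) = Min (g ` e)"
  obtains x where "x \<in> Y \<inter> e" "(\<Sum>y\<in>Y \<inter> e. g y - measure lebesgue (P e)) \<le> g x - measure lebesgue (P e)"
proof -
  obtain u v where uv: "e = {u, v}" "u \<noteq> v"
    using is_matching_edgeE[OF matching \<open>e \<in> M\<close>] by metis
  have "measure lebesgue (P e) \<le> min (g u) (g v)"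
    using P_edge(3)[OF assms(1) uv(1)] .
  moreover have "{u, v} \<subseteq> Y \<Longrightarrow> measure lebesgue (P e) = min (g u) (g v)"
    using assms(3) uv(1) by simp
  moreover have "Y \<inter> {u, v} \<noteq> {}"
    using assms(2) uv(1) by simp
  ultimately obtain x where "x \<in> Y \<inter> {u, v}"
    "(\<Sum>y\<in>Y \<inter> {u, v}. g y - measure lebesgue (P e)) \<le> g x - measure lebesgue (P e)"
    using edge_residual_sum_le[OF uv(2)] by metis
  then show ?thesis
    using that uv(1) by blast
qed

lemma residual_edge_sum_le_Max:
  assumes "e \<in> M" "e \<subseteq> Y \<Longrightarrow> measure lebesgue (P e) = Min (g ` e)"
  shows "(\<Sum>y\<in>Y \<inter> e. g y - measure lebesgue (P e)) \<le> Max (g ` e) - measure lebesgue (P e)"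
proof -
  obtain u v where uv: "e = {u, v}"
    using is_matching_edgeE[OF matching \<open>e \<in> M\<close>] by metis
  show ?thesis
  proof (cases "Y \<inter> e = {}")
    case True
    then show ?thesis
      using P_edge(3)[OF assms(1) uv] uv by auto
  next
    case False
    then obtain x where "x \<in> Y \<inter> e" "(\<Sum>y\<in>Y \<inter> e. g y - measure lebesgue (P e)) \<le> g x - measure lebesgue (P e)"
      using residual_edge_sum_le assms by blast
    moreover have "g x \<le> Max (g ` e)"
      using \<open>x \<in> Y \<inter> e\<close> uv by auto
    ultimately show ?thesis
      by linarith
  qed
qed

lemma measure_residual_lists_ge_vertex:
  "Y \<subseteq> V \<Longrightarrow> x \<in> Y \<Longrightarrow>
    measure lebesgue (L x) - (\<Sum>e\<in>M. measure lebesgue (P e)) \<le> measure lebesgue (\<Union>(residual_list ` Y))"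
  using lists unfolding frac_list_assignment_def by (intro measure_residual_lists_ge) blast+

lemma hall_residual_saturated_unmatched:
  assumes "Y \<subseteq> V" "w \<in> Y" "w \<notin> \<Union>M"
    and saturated: "\<And>e. e \<in> M \<Longrightarrow> e \<subseteq> Y \<Longrightarrow> measure lebesgue (P e) = Min (g ` e)"
  shows "sum residual_demand Y \<le> measure lebesgue (\<Union>(residual_list ` Y))"
proof -
  have "sum g (Y - \<Union>M) \<le> sum g (V - \<Union>M)"
    using finite_V assms(1) demand_nonneg by (intro sum_mono2) auto
  moreover have "(\<Sum>e\<in>M. \<Sum>y\<in>Y \<inter> e. g y - measure lebesgue (P e))
      \<le> (\<Sum>e\<in>M. Max (g ` e)) - (\<Sum>e\<in>M. measure lebesgue (P e))"
    unfolding sum_subtractf[symmetric] using residual_edge_sum_le_Max saturated by (intro sum_mono) blast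
  moreover have "w \<in> V - \<Union>M"
    using assms(1-3) by blast
  then have "(\<Sum>u\<in>V - \<Union>M. g u) + (\<Sum>e\<in>M. Max (g ` e)) \<le> measure lebesgue (L w)"
    using cond_unmatched by blast
  ultimately show ?thesis
    using sum_residual_demand[OF assms(1)] measure_residual_lists_ge_vertex[OF assms(1,2)] by linarith
qed

lemma hall_residual_saturated_matched:
  assumes "Y \<subseteq> V" "Y \<subseteq> \<Union>M" "Y \<noteq> {}"
    and saturated: "\<And>e. e \<in> M \<Longrightarrow> e \<subseteq> Y \<Longrightarrow> measure lebesgue (P e) = Min (g ` e)"
  shows "sum residual_demand Y \<le> measure lebesgue (\<Union>(residual_list ` Y))"
proof -
  define D where "D e = (\<Sum>y\<in>Y \<inter> e. g y - measure lebesgue (P e))" for e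
  obtain e0 where "e0 \<in> M" "Y \<inter> e0 \<noteq> {}"
    using assms(2,3) by blast
  then obtain x where x: "x \<in> Y" "x \<in> e0" "D e0 \<le> g x - measure lebesgue (P e0)"
    unfolding D_def using residual_edge_sum_le[OF \<open>e0 \<in> M\<close> _ saturated[OF \<open>e0 \<in> M\<close>]] by blast
  have "{e \<in> M. x \<notin> e} = M - {e0}"
    using is_matching_edges_at[OF matching \<open>e0 \<in> M\<close> x(2)] by blast
  moreover have "x \<in> \<Union>M"
    using x(2) \<open>e0 \<in> M\<close> by blast
  ultimately have "g x + (\<Sum>e\<in>M - {e0}. Max (g ` e)) \<le> measure lebesgue (L x)"
    using cond_matched by fastforce
  moreover have "sum D (M - {e0}) \<le> (\<Sum>e\<in>M - {e0}. Max (g ` e)) - (\<Sum>e\<in>M - {e0}. measure lebesgue (P e))"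
    unfolding D_def sum_subtractf[symmetric] using residual_edge_sum_le_Max saturated by (intro sum_mono) blast
  moreover have "sum D M = D e0 + sum D (M - {e0})"
    "(\<Sum>e\<in>M. measure lebesgue (P e)) = measure lebesgue (P e0) + (\<Sum>e\<in>M - {e0}. measure lebesgue (P e))"
    using finite_M \<open>e0 \<in> M\<close> by (simp_all add: sum.remove)
  moreover have "sum g (Y - \<Union>M) = 0"
    using assms(2) by (simp add: Diff_eq_empty_iff[THEN iffD2])
  ultimately show ?thesis
    using sum_residual_demand[OF assms(1)] measure_residual_lists_ge_vertex[OF assms(1) x(1)] x(3)
    unfolding D_def by linarith
qed

lemma hall_residual: "hall_condition V residual_list residual_demand"
  unfolding hall_condition_def
proof (intro allI impI)
  fix Y assume "Y \<subseteq> V"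
  consider "\<exists>e\<in>M. e \<subseteq> Y \<and> measure lebesgue (P e) \<noteq> Min (g ` e)" | "Y = {}"
    | "\<forall>e\<in>M. e \<subseteq> Y \<longrightarrow> measure lebesgue (P e) = Min (g ` e)" "\<exists>w\<in>Y. w \<notin> \<Union>M"
    | "\<forall>e\<in>M. e \<subseteq> Y \<longrightarrow> measure lebesgue (P e) = Min (g ` e)" "Y \<subseteq> \<Union>M" "Y \<noteq> {}"
    by blast
  then show "sum residual_demand Y \<le> measure lebesgue (\<Union>(residual_list ` Y))"
  proof cases
    case 1
    then show ?thesis
      using hall_residual_unsaturated_edge \<open>Y \<subseteq> V\<close> by blast
  next
    case 2
    then show ?thesis
      by simp
  next
    case 3
    then show ?thesis
      using hall_residual_saturated_unmatched[OF \<open>Y \<subseteq> V\<close>] by blast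
  next
    case 4
    then show ?thesis
      using hall_residual_saturated_matched[OF \<open>Y \<subseteq> V\<close>] by blast
  qed
qed

end

lemma ex_shared_colors:
  assumes "finite V" "is_matching V M" "\<forall>v\<in>V. 0 \<le> g v" "frac_list_assignment V L"
    and "\<forall>v\<in>V - \<Union>M. measure lebesgue (L v) \<ge> (\<Sum>u\<in>V - \<Union>M. g u) + (\<Sum>e\<in>M. Max (g ` e))"
    and "\<forall>v\<in>\<Union>M. measure lebesgue (L v) \<ge> g v + (\<Sum>e\<in>{e\<in>M. v \<notin> e}. Max (g ` e))"
    and "\<forall>u v. {u, v} \<in> M \<longrightarrow> measure lebesgue (L u) + measure lebesgue (L v) \<ge> (\<Sum>w\<in>V. g w)"
  shows "\<exists>P. shared_colors V M g L P"
proof -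
  have "\<Inter>(L ` e) \<in> sets lebesgue \<and> \<Inter>(L ` e) \<subseteq> {0..1} \<and> 0 \<le> Min (g ` e)" if "e \<in> M" for e
  proof -
    obtain u v where "e = {u, v}" "u \<in> V" "v \<in> V"
      using is_matching_edgeE[OF assms(2) \<open>e \<in> M\<close>] by metis
    then show ?thesis
      using assms(3,4) unfolding frac_list_assignment_def by auto
  qed
  then have "\<forall>e\<in>M. \<Inter>(L ` e) \<in> sets lebesgue \<and> \<Inter>(L ` e) \<subseteq> {0..1}" "\<forall>e\<in>M. 0 \<le> Min (g ` e)"
    by simp_all
  from disjoint_subsets_saturating[OF finite_is_matching[OF assms(1,2)] this]
  obtain P where "disjoint_family_on P M"
    and "\<forall>e\<in>M. P e \<in> sets lebesgue \<and> P e \<subseteq> \<Inter>(L ` e) \<and> measure lebesgue (P e) \<le> Min (g ` e) \<and>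
      (measure lebesgue (P e) = Min (g ` e) \<or> \<Inter>(L ` e) \<subseteq> \<Union>(P ` M))"
    by blast
  then have "shared_colors V M g L P"
    using assms by unfold_locales
  then show ?thesis
    by blast
qed

theorem lemma2p11:
  fixes V :: "'a set" and M :: "'a set set" and g :: "'a \<Rightarrow> real" and L :: "'a \<Rightarrow> real set"
  assumes "finite V"
    and "is_matching V M"
    and "demand_function V g"
    and "frac_list_assignment V L"
    and "\<forall>v\<in>V - \<Union>M. measure lebesgue (L v) \<ge>
           (\<Sum>u\<in>V - \<Union>M. g u) + (\<Sum>e\<in>M. Max (g ` e))"
    and "\<forall>v\<in>\<Union>M. measure lebesgue (L v) \<ge>
           g v + (\<Sum>e\<in>{e\<in>M. v \<notin> e}. Max (g ` e))"
    and "\<forall>u v. {u, v} \<in> M \<longrightarrow> measure lebesgue (L u) + measure lebesgue (L v) \<ge> (\<Sum>w\<in>V. g w)"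
  shows "\<exists>\<phi>. frac_coloring V (complete_edges V - M) g L \<phi>"
proof -
  have "\<forall>v\<in>V. 0 \<le> g v"
    using assms(3) unfolding demand_function_def by blast
  then obtain P where "shared_colors V M g L P"
    using ex_shared_colors[OF assms(1,2) _ assms(4-7)] by blast
  then interpret shared_colors V M g L P .
  have "frac_list_assignment V residual_list"
    unfolding residual_list_def using assms(4) fmeasurableD[OF UN_P_fmeasurable] by (rule frac_list_assignment_Diff)
  then obtain \<phi> where "frac_coloring V (complete_edges V) residual_demand residual_list \<phi>"
    using frac_coloring_complete_edges_if_hall[OF assms(1) _ _ hall_residual] residual_demand_nonneg by blast
  then have "frac_coloring V (complete_edges V - M) g L (\<lambda>x. \<phi> x \<union> shared x)"
    using frac_coloring_extend_precoloring[OF assms(4) Diff_subset shared_in_list shared_disjoint] UN_shared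
    unfolding residual_demand_def residual_list_def by simp
  then show ?thesis
    by blast
qed

end
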